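(* Let $n\ge 0$ be an integer, $\kappa\in\mathbb{R}$, $T>0$ and $0<|\phi|<1/2$ satisfy $$\coth\big((\tfrac12-\phi)T\big)=\kappa-\coth\big((\tfrac12+\phi)T\big),$$ and set $\tau=(2n+1)T/2$. Define $$\gamma_1=\frac{\coth^2(\tau-(n-\phi)T)-1}{[\kappa-\coth(\tau-(n-\phi)T)]^2-1},\qquad \gamma_2=\frac{\coth^2(\tau-(n+\phi)T)-1}{[\kappa-\coth(\tau-(n+\phi)T)]^2-1}.$$ Then $\gamma_1\gamma_2=1$ and $\beta:=\gamma_1+\gamma_2>2$; moreover $\widehat D_s(\lambda)=\lambda^{2n}(\lambda-\gamma_1)(\lambda-\gamma_2)-(1-\gamma_1)(1-\gamma_2)$ factors as $(\lambda-1)\widehat H_s(\lambda)$ with $$\widehat H_s(\lambda)=\lambda^{2n+1}+(1-\beta)\lambda^{2n}+(2-\beta)\sum_{i=0}^{2n-1}\lambda^i,$$ and $\widehat D_s$ has a real root strictly greater than $1$. *)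

theory Defs
  imports Complex_Main
begin

definition coth :: "real \<Rightarrow> real" where
  "coth x = cosh x / sinh x"

end

theory Submission
  imports Defs
begin

text \<open>With \<open>a = (1/2 + \<phi>) T\<close> and \<open>b = (1/2 - \<phi>) T\<close> the arguments of \<open>coth\<close> are
  \<open>a\<close> and \<open>b\<close>, and the hypothesis reads \<open>\<kappa> = coth a + coth b\<close>. Since
  \<open>coth\<^sup>2 x - 1 = 1 / sinh\<^sup>2 x\<close>, this gives \<open>\<gamma>\<^sub>1 = (sinh b / sinh a)\<^sup>2 = 1 / \<gamma>\<^sub>2\<close>,
  and \<open>\<gamma>\<^sub>1 \<noteq> 1\<close> because \<open>a \<noteq> b\<close>, so \<open>\<beta> > 2\<close> by AM-GM. The factorisation is a
  geometric-sum identity, and \<open>H\<close> changes sign on \<open>[1, \<beta>]\<close>: \<open>H 1 = (2n + 1)(2 - \<beta>) < 0\<close>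
  while \<open>D \<beta> = \<beta>^(2n) + \<beta> - 2 > 0\<close>.\<close>

lemma coth_square_minus_one:
  assumes "x \<noteq> 0"
  shows "(coth x)\<^sup>2 - 1 = 1 / (sinh x)\<^sup>2"
  using assms cosh_square_eq[of x] unfolding coth_def
  by (simp add: power_divide field_simps)

lemma coth_square_minus_one_ratio:
  assumes "a \<noteq> 0" "b \<noteq> 0"
  shows "((coth a)\<^sup>2 - 1) / ((coth b)\<^sup>2 - 1) = (sinh b / sinh a)\<^sup>2"
  using assms by (simp add: coth_square_minus_one power_divide)

lemma sum_gt_two_if_mult_eq_one:
  fixes g h :: real
  assumes "g > 0" "g * h = 1" "g \<noteq> 1"
  shows "g + h > 2"
proof -
  have "g * (g + h - 2) = (g - 1)\<^sup>2"
    using assms(2) by (simp add: power2_eq_square algebra_simps)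
  also have "\<dots> > 0"
    using assms(3) by simp
  finally show ?thesis
    using assms(1) by (simp add: zero_less_mult_iff)
qed

lemma reciprocal_pair_poly_factor:
  fixes x g h :: "'a :: comm_ring_1"
  assumes "g * h = 1"
  shows "x ^ m * (x - g) * (x - h) - (1 - g) * (1 - h)
         = (x - 1) * (x ^ (m + 1) + (1 - (g + h)) * x ^ m + (2 - (g + h)) * (\<Sum>i<m. x ^ i))"
proof -
  have cancel: "g * (h * y) = y" for y
    using assms by (metis mult.assoc mult_1)
  have geometric: "(x - 1) * (\<Sum>i<m. x ^ i) = x ^ m - 1"
    using power_diff_1_eq[of x m] by simp
  have "(x - 1) * (x ^ (m + 1) + (1 - (g + h)) * x ^ m + (2 - (g + h)) * (\<Sum>i<m. x ^ i))
        = (x - 1) * x ^ (m + 1) + (1 - (g + h)) * ((x - 1) * x ^ m)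
          + (2 - (g + h)) * ((x - 1) * (\<Sum>i<m. x ^ i))"
    by (simp only: algebra_simps)
  also have "\<dots> = x ^ m * (x - g) * (x - h) - (1 - g) * (1 - h)"
    unfolding geometric using assms by (simp add: algebra_simps power_add power2_eq_square cancel)
  finally show ?thesis ..
qed

lemma reciprocal_pair_poly_root_gt_one:
  fixes g h :: real
  assumes "g * h = 1" "g + h > 2"
  shows "\<exists>x>1. x ^ m * (x - g) * (x - h) - (1 - g) * (1 - h) = 0"
proof -
  define \<beta> where "\<beta> = g + h"
  define H where "H x = x ^ (m + 1) + (1 - \<beta>) * x ^ m + (2 - \<beta>) * (\<Sum>i<m. x ^ i)" for x :: real
  have factor: "x ^ m * (x - g) * (x - h) - (1 - g) * (1 - h) = (x - 1) * H x" for x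
    unfolding H_def \<beta>_def by (rule reciprocal_pair_poly_factor[OF assms(1)])
  have \<beta>: "\<beta> > 2"
    using assms(2) by (simp add: \<beta>_def)
  have H_one: "H 1 < 0"
  proof -
    have "H 1 = (2 - \<beta>) * (real m + 1)"
      unfolding H_def by (simp add: algebra_simps)
    thus ?thesis
      using \<beta> by (simp add: mult_neg_pos)
  qed
  have "(\<beta> - 1) * H \<beta> = \<beta> ^ m * (\<beta> - g) * (\<beta> - h) - (1 - g) * (1 - h)"
    by (rule factor[symmetric])
  also have "\<dots> = \<beta> ^ m + (\<beta> - 2)"
    using assms(1) by (simp add: \<beta>_def algebra_simps)
  also have "\<dots> > 0"
    using \<beta> by (simp add: add_pos_pos)
  finally have H_\<beta>: "H \<beta> > 0"
    using \<beta> by (simp add: zero_less_mult_iff)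
  have "continuous_on {1..\<beta>} H"
    unfolding H_def by (intro continuous_intros)
  then obtain x where x: "1 \<le> x" "x \<le> \<beta>" "H x = 0"
    using IVT'[of H 1 0 \<beta>] H_one H_\<beta> \<beta> by fastforce
  with H_one have "x > 1"
    by (cases "x = 1") auto
  with x factor show ?thesis
    by auto
qed

theorem mainTheorem4:
  fixes n :: nat and \<kappa> T \<phi> :: real
  assumes hT: "T > 0"
    and h\<phi>: "0 < \<bar>\<phi>\<bar>" "\<bar>\<phi>\<bar> < 1/2"
    and heq: "coth ((1/2 - \<phi>) * T) = \<kappa> - coth ((1/2 + \<phi>) * T)"
  defines "\<tau> \<equiv> (2 * real n + 1) * T / 2"
  defines "\<gamma>\<^sub>1 \<equiv> ((coth (\<tau> - (real n - \<phi>) * T))\<^sup>2 - 1) /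
                    ((\<kappa> - coth (\<tau> - (real n - \<phi>) * T))\<^sup>2 - 1)"
  defines "\<gamma>\<^sub>2 \<equiv> ((coth (\<tau> - (real n + \<phi>) * T))\<^sup>2 - 1) /
                    ((\<kappa> - coth (\<tau> - (real n + \<phi>) * T))\<^sup>2 - 1)"
  defines "\<beta> \<equiv> \<gamma>\<^sub>1 + \<gamma>\<^sub>2"
  defines "D \<equiv> (\<lambda>x::real. x ^ (2 * n) * (x - \<gamma>\<^sub>1) * (x - \<gamma>\<^sub>2) - (1 - \<gamma>\<^sub>1) * (1 - \<gamma>\<^sub>2))"
  defines "H \<equiv> (\<lambda>x::real. x ^ (2 * n + 1) + (1 - \<beta>) * x ^ (2 * n)
                         + (2 - \<beta>) * (\<Sum>i<2 * n. x ^ i))"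
  shows "\<gamma>\<^sub>1 * \<gamma>\<^sub>2 = 1 \<and> \<beta> > 2 \<and> (\<forall>x. D x = (x - 1) * H x)
         \<and> (\<exists>x>1. D x = 0)"
proof -
  define a where "a = (1/2 + \<phi>) * T"
  define b where "b = (1/2 - \<phi>) * T"
  have a: "a > 0" and b: "b > 0" and "a \<noteq> b"
    using hT h\<phi> by (auto simp: a_def b_def)
  have \<kappa>: "\<kappa> - coth a = coth b" "\<kappa> - coth b = coth a"
    using heq by (simp_all add: a_def b_def)
  have "\<tau> - (real n - \<phi>) * T = a" "\<tau> - (real n + \<phi>) * T = b"
    by (simp_all add: \<tau>_def a_def b_def algebra_simps)
  then have \<gamma>\<^sub>1: "\<gamma>\<^sub>1 = (sinh b / sinh a)\<^sup>2" and \<gamma>\<^sub>2: "\<gamma>\<^sub>2 = (sinh a / sinh b)\<^sup>2"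
    using a b by (simp_all add: \<gamma>\<^sub>1_def \<gamma>\<^sub>2_def \<kappa> coth_square_minus_one_ratio)
  have prod: "\<gamma>\<^sub>1 * \<gamma>\<^sub>2 = 1"
    using a b by (simp add: \<gamma>\<^sub>1 \<gamma>\<^sub>2 power_divide)
  have "\<gamma>\<^sub>1 \<noteq> 1"
    using a b \<open>a \<noteq> b\<close> by (simp add: \<gamma>\<^sub>1 power_divide power2_eq_iff_nonneg)
  moreover have "\<gamma>\<^sub>1 > 0"
    using a b by (simp add: \<gamma>\<^sub>1)
  ultimately have \<beta>: "\<beta> > 2"
    using prod sum_gt_two_if_mult_eq_one unfolding \<beta>_def by blast
  show ?thesis
    using prod \<beta> reciprocal_pair_poly_factor[OF prod] reciprocal_pair_poly_root_gt_one[OF prod]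
    by (auto simp: D_def H_def \<beta>_def)
qed

end
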